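(* Let $\theta$ be a finite rooted tree with $n\ge1$ nodes, in which every node $v$ carries a type $\eta_v\in\{0,1,2,3\}$, subject to the constraint: no node of type $0$ or $1$ has exactly one child (immediately preceding node) with that child being of type $0$ or $1$. Let $N_i^1(\theta)$ be the number of internal nodes (nodes with at least one child) of type $1$ in $\theta$. Then $N_i^1(\theta)\le \frac{2n-1}{3}$.
   Context: In a rooted tree, the children of a node $v$ are the nodes immediately preceding $v$ (i.e. whose outgoing line enters $v$); end-nodes are nodes with no children and internal nodes are the others. All nodes, including the root node, are counted in $n$. *)

theory Defs
  imports Complex_Main
begin

text \<open>A node is represented as Node eta children, where eta is its type and
  children is the list of subtrees rooted at its children (the nodes immediately
  preceding it). The order of the list is irrelevant for all notions below.\<close>
datatype ttree = Node nat "ttree list"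

fun label :: "ttree \<Rightarrow> nat" where
  "label (Node e ts) = e"

fun children :: "ttree \<Rightarrow> ttree list" where
  "children (Node e ts) = ts"

fun nnodes :: "ttree \<Rightarrow> nat" where
  "nnodes (Node e ts) = 1 + sum_list (map nnodes ts)"

fun types_ok :: "ttree \<Rightarrow> bool" where
  "types_ok (Node e ts) = (e \<le> 3 \<and> (\<forall>t\<in>set ts. types_ok t))"

fun constraint_ok :: "ttree \<Rightarrow> bool" where
  "constraint_ok (Node e ts) =
     (\<not> (e \<in> {0,1} \<and> length ts = 1 \<and> label (hd ts) \<in> {0,1})
      \<and> (\<forall>t\<in>set ts. constraint_ok t))"

fun N_i1 :: "ttree \<Rightarrow> nat" where
  "N_i1 (Node e ts) = (if e = 1 \<and> ts \<noteq> [] then 1 else 0) + sum_list (map N_i1 ts)"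

end

theory Submission
  imports Defs
begin

text \<open>Induction on the tree with the strengthened invariant that a root of type other than 0 or 1
  leaves one extra unit of slack, 3N + 2 \<le> 2n. Summing the invariant over the children
  gives 3N + k \<le> 2n for the children of a node with k children, so an internal node of
  type 1 costs nothing when k \<ge> 2; when k = 1 the constraint forces the only child to have the
  extra slack.\<close>

definition slack :: "ttree \<Rightarrow> nat" where
  "slack t = (if label t \<in> {0, 1} then 1 else 2)"

lemma sum_list_N_i1_le:
  assumes "\<forall>t\<in>set ts. 3 * N_i1 t + 1 \<le> 2 * nnodes t"
  shows "3 * sum_list (map N_i1 ts) + length ts \<le> 2 * sum_list (map nnodes ts)"
  using assms by (induction ts) auto

lemma N_i1_slack_le_nnodes:
  "constraint_ok t \<Longrightarrow> 3 * N_i1 t + slack t \<le> 2 * nnodes t"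
proof (induction t)
  case (Node e ts)
  have IH: "3 * N_i1 c + slack c \<le> 2 * nnodes c" if "c \<in> set ts" for c
    using Node that by auto
  have children: "3 * sum_list (map N_i1 ts) + length ts \<le> 2 * sum_list (map nnodes ts)"
  proof (intro sum_list_N_i1_le ballI)
    fix c assume "c \<in> set ts"
    then show "3 * N_i1 c + 1 \<le> 2 * nnodes c"
      using IH[of c] by (simp add: slack_def split: if_splits)
  qed
  consider "\<not> (e = 1 \<and> ts \<noteq> [])" | "e = 1" "length ts \<ge> 2" | c where "e = 1" "ts = [c]"
    by (cases ts) (auto simp: Suc_le_eq)
  then show ?case
  proof cases
    case 3
    with Node.prems have "label c \<notin> {0, 1}" by auto
    with IH[of c] have "3 * N_i1 c + 2 \<le> 2 * nnodes c" by (simp add: 3 slack_def)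
    with 3 show ?thesis by (simp add: slack_def)
  qed (use children in \<open>auto simp: slack_def\<close>)
qed

theorem lemma2p1:
  fixes \<theta> :: ttree
  assumes "types_ok \<theta>" and "constraint_ok \<theta>"
  shows "real (N_i1 \<theta>) \<le> (2 * real (nnodes \<theta>) - 1) / 3"
proof -
  have "3 * N_i1 \<theta> + 1 \<le> 2 * nnodes \<theta>"
    using N_i1_slack_le_nnodes[OF assms(2)] by (simp add: slack_def split: if_splits)
  then show ?thesis by (simp add: field_simps)
qed

end
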